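(* The logic $\mathsf{CS4}$ has the finite model property: for every formula $\varphi$, if $\mathsf{CS4}\nvdash\varphi$, then there is a $\mathsf{CS4}$-model $\mathcal M=(W,W_\bot,\preccurlyeq,\sqsubseteq,V)$ with $W$ finite such that $\mathcal M\not\models\varphi$. (Conversely, every theorem of $\mathsf{CS4}$ is valid on all $\mathsf{CS4}$-models.)
   Context: Fix a countably infinite set $\mathbb P$ of propositional variables. Formulas: $\varphi,\psi ::= p\mid\bot\mid(\varphi\wedge\psi)\mid(\varphi\vee\psi)\mid(\varphi\to\psi)\mid\Diamond\varphi\mid\Box\varphi$ with $p\in\mathbb P$; $\neg\varphi:=\varphi\to\bot$. A bi-intuitionistic frame is $\mathcal F=(W,W_\bot,\preccurlyeq,\sqsubseteq)$ where $\preccurlyeq$ and $\sqsubseteq$ are preorders on a set $W$ and $W_\bot\subseteq W$ (the fallible worlds) is upward closed under both $\preccurlyeq$ and $\sqsubseteq$; it is infallible if $W_\bot=\varnothing$. A valuation is a map $V:\mathbb P\to 2^W$ such that each $V(p)$ is upward closed under $\preccurlyeq$ and $W_\bot\subseteq V(p)$; a model is $\mathcal M=(W,W_\bot,\preccurlyeq,\sqsubseteq,V)$. Satisfaction: $(\mathcal M,w)\models p$ iff $w\in V(p)$; $(\mathcal M,w)\models\bot$ iff $w\in W_\bot$; $\wedge,\vee$ pointwise; $(\mathcal M,w)\models\varphi\to\psi$ iff for all $v\succcurlyeq w$, $(\mathcal M,v)\models\varphi$ implies $(\mathcal M,v)\models\psi$; $(\mathcal M,w)\models\Diamond\varphi$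 iff for all $u\succcurlyeq w$ there is $v\sqsupseteq u$ with $(\mathcal M,v)\models\varphi$; $(\mathcal M,w)\models\Box\varphi$ iff for all $u,v$ with $w\preccurlyeq u\sqsubseteq v$, $(\mathcal M,v)\models\varphi$. $\mathcal M\models\varphi$ means $(\mathcal M,w)\models\varphi$ for all $w\in W\setminus W_\bot$. For $R\subseteq W\times W$ (relative to $\preccurlyeq$): $R$ is backward confluent if $wRv\preccurlyeq v'$ implies there is $w'$ with $w\preccurlyeq w'Rv'$. A $\mathsf{CS4}$-frame is a bi-intuitionistic frame in which $\sqsubseteq$ is backward confluent; a $\mathsf{CS4}$-model is a model on such a frame. $\mathsf{CS4}$ is the least set of formulas containing all intuitionistic propositional tautologies (in this language) and all instances of $\Box(\varphi\to\psi)\to(\Box\varphi\to\Box\psi)$, $\Box(\varphi\to\psi)\to(\Diamond\varphi\to\Diamond\psi)$, $\Box\varphi\to\varphi$, $\varphi\to\Diamond\varphi$, $\Box\varphi\to\Box\Box\varphi$, $\Diamond\Diamond\varphi\to\Diamond\varphi$, closed under modus ponens and necessitation (from $\varphi$ infer $\Box\varphi$). *)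

theory Defs
  imports Main
begin

datatype fm =
    Var nat
  | Bot
  | And fm fm
  | Or fm fm
  | Imp fm fm
  | Dia fm
  | Box fm

definition Neg :: "fm \<Rightarrow> fm" where "Neg \<phi> = Imp \<phi> Bot"

inductive ipc_thm :: "fm \<Rightarrow> bool" where
  ax1: "ipc_thm (Imp \<phi> (Imp \<psi> \<phi>))"
| ax2: "ipc_thm (Imp (Imp \<phi> (Imp \<psi> \<chi>)) (Imp (Imp \<phi> \<psi>) (Imp \<phi> \<chi>)))"
| ax3: "ipc_thm (Imp (And \<phi> \<psi>) \<phi>)"
| ax4: "ipc_thm (Imp (And \<phi> \<psi>) \<psi>)"
| ax5: "ipc_thm (Imp \<phi> (Imp \<psi> (And \<phi> \<psi>)))"
| ax6: "ipc_thm (Imp \<phi> (Or \<phi> \<psi>))"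
| ax7: "ipc_thm (Imp \<psi> (Or \<phi> \<psi>))"
| ax8: "ipc_thm (Imp (Imp \<phi> \<chi>) (Imp (Imp \<psi> \<chi>) (Imp (Or \<phi> \<psi>) \<chi>)))"
| ax9: "ipc_thm (Imp Bot \<phi>)"
| mp: "ipc_thm (Imp \<phi> \<psi>) \<Longrightarrow> ipc_thm \<phi> \<Longrightarrow> ipc_thm \<psi>"

inductive CS4 :: "fm \<Rightarrow> bool" where
  ipc: "ipc_thm \<phi> \<Longrightarrow> CS4 \<phi>"
| K_box: "CS4 (Imp (Box (Imp \<phi> \<psi>)) (Imp (Box \<phi>) (Box \<psi>)))"
| K_dia: "CS4 (Imp (Box (Imp \<phi> \<psi>)) (Imp (Dia \<phi>) (Dia \<psi>)))"
| T_box: "CS4 (Imp (Box \<phi>) \<phi>)"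
| T_dia: "CS4 (Imp \<phi> (Dia \<phi>))"
| four_box: "CS4 (Imp (Box \<phi>) (Box (Box \<phi>)))"
| four_dia: "CS4 (Imp (Dia (Dia \<phi>)) (Dia \<phi>))"
| MP: "CS4 (Imp \<phi> \<psi>) \<Longrightarrow> CS4 \<phi> \<Longrightarrow> CS4 \<psi>"
| Nec: "CS4 \<phi> \<Longrightarrow> CS4 (Box \<phi>)"

definition preorder_on :: "'w set \<Rightarrow> ('w \<Rightarrow> 'w \<Rightarrow> bool) \<Rightarrow> bool" where
  "preorder_on W R \<longleftrightarrow>
     (\<forall>x y. R x y \<longrightarrow> x \<in> W \<and> y \<in> W) \<and>
     (\<forall>x\<in>W. R x x) \<and>
     (\<forall>x y z. R x y \<longrightarrow> R y z \<longrightarrow> R x z)"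

definition up_closed :: "('w \<Rightarrow> 'w \<Rightarrow> bool) \<Rightarrow> 'w set \<Rightarrow> bool" where
  "up_closed R A \<longleftrightarrow> (\<forall>x y. x \<in> A \<longrightarrow> R x y \<longrightarrow> y \<in> A)"

definition bi_int_frame ::
  "'w set \<Rightarrow> 'w set \<Rightarrow> ('w \<Rightarrow> 'w \<Rightarrow> bool) \<Rightarrow> ('w \<Rightarrow> 'w \<Rightarrow> bool) \<Rightarrow> bool" where
  "bi_int_frame W Wb le sq \<longleftrightarrow>
     preorder_on W le \<and> preorder_on W sq \<and> Wb \<subseteq> W \<and> up_closed le Wb \<and> up_closed sq Wb"

definition backward_confluent :: "('w \<Rightarrow> 'w \<Rightarrow> bool) \<Rightarrow> ('w \<Rightarrow> 'w \<Rightarrow> bool) \<Rightarrow> bool" where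
  "backward_confluent le R \<longleftrightarrow>
     (\<forall>w v v'. R w v \<longrightarrow> le v v' \<longrightarrow> (\<exists>w'. le w w' \<and> R w' v'))"

definition CS4_frame ::
  "'w set \<Rightarrow> 'w set \<Rightarrow> ('w \<Rightarrow> 'w \<Rightarrow> bool) \<Rightarrow> ('w \<Rightarrow> 'w \<Rightarrow> bool) \<Rightarrow> bool" where
  "CS4_frame W Wb le sq \<longleftrightarrow> bi_int_frame W Wb le sq \<and> backward_confluent le sq"

definition valuation ::
  "'w set \<Rightarrow> 'w set \<Rightarrow> ('w \<Rightarrow> 'w \<Rightarrow> bool) \<Rightarrow> (nat \<Rightarrow> 'w set) \<Rightarrow> bool" where
  "valuation W Wb le V \<longleftrightarrow> (\<forall>p. V p \<subseteq> W \<and> up_closed le (V p) \<and> Wb \<subseteq> V p)"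

definition CS4_model ::
  "'w set \<Rightarrow> 'w set \<Rightarrow> ('w \<Rightarrow> 'w \<Rightarrow> bool) \<Rightarrow> ('w \<Rightarrow> 'w \<Rightarrow> bool) \<Rightarrow> (nat \<Rightarrow> 'w set) \<Rightarrow> bool" where
  "CS4_model W Wb le sq V \<longleftrightarrow> CS4_frame W Wb le sq \<and> valuation W Wb le V"

fun sat ::
  "'w set \<Rightarrow> ('w \<Rightarrow> 'w \<Rightarrow> bool) \<Rightarrow> ('w \<Rightarrow> 'w \<Rightarrow> bool) \<Rightarrow> (nat \<Rightarrow> 'w set) \<Rightarrow> 'w \<Rightarrow> fm \<Rightarrow> bool" where
  "sat Wb le sq V w (Var p) \<longleftrightarrow> w \<in> V p"
| "sat Wb le sq V w Bot \<longleftrightarrow> w \<in> Wb"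
| "sat Wb le sq V w (And \<phi> \<psi>) \<longleftrightarrow> sat Wb le sq V w \<phi> \<and> sat Wb le sq V w \<psi>"
| "sat Wb le sq V w (Or \<phi> \<psi>) \<longleftrightarrow> sat Wb le sq V w \<phi> \<or> sat Wb le sq V w \<psi>"
| "sat Wb le sq V w (Imp \<phi> \<psi>) \<longleftrightarrow>
     (\<forall>v. le w v \<longrightarrow> sat Wb le sq V v \<phi> \<longrightarrow> sat Wb le sq V v \<psi>)"
| "sat Wb le sq V w (Dia \<phi>) \<longleftrightarrow>
     (\<forall>u. le w u \<longrightarrow> (\<exists>v. sq u v \<and> sat Wb le sq V v \<phi>))"
| "sat Wb le sq V w (Box \<phi>) \<longleftrightarrow>
     (\<forall>u v. le w u \<longrightarrow> sq u v \<longrightarrow> sat Wb le sq V v \<phi>)"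

text \<open>Validity in a model: truth at every infallible world.\<close>
definition valid_in ::
  "'w set \<Rightarrow> 'w set \<Rightarrow> ('w \<Rightarrow> 'w \<Rightarrow> bool) \<Rightarrow> ('w \<Rightarrow> 'w \<Rightarrow> bool) \<Rightarrow> (nat \<Rightarrow> 'w set) \<Rightarrow> fm \<Rightarrow> bool" where
  "valid_in W Wb le sq V \<phi> \<longleftrightarrow> (\<forall>w \<in> W - Wb. sat Wb le sq V w \<phi>)"

end

theory Submission
  imports Defs
begin

text \<open>For completeness, fix a formula
  \<open>\<phi>\<close> that is not a theorem and let \<open>S\<close> be its subformulas together with
  \<open>Box Bot\<close> and \<open>Bot\<close>. The canonical worlds are the prime theories relative to \<open>S\<close>, each paired
  with an optional pending diamond; intuitionistic accessibility is inclusion and modal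
  accessibility transfers boxed formulas together with their boxes (this is axiom 4) and keeps the
  pending diamond. Since \<open>S\<close> is finite there are only finitely many worlds, backward
  confluence holds because dropping the pending diamond of a world gives a common
  \<open>\<preccurlyeq>\<close>-successor, and the truth lemma shows that a prime theory avoiding \<open>\<phi>\<close>,
  obtained by a finite Lindenbaum argument, refutes \<open>\<phi>\<close>. Renaming the worlds by natural
  numbers gives the required model.\<close>

definition pullback_rel :: "('a \<Rightarrow> 'b) \<Rightarrow> 'a set \<Rightarrow> ('b \<Rightarrow> 'b \<Rightarrow> bool) \<Rightarrow> 'a \<Rightarrow> 'a \<Rightarrow> bool" where
  "pullback_rel g N R x y \<longleftrightarrow> x \<in> N \<and> y \<in> N \<and> R (g x) (g y)"

locale CS4_semantics =
  fixes W :: "'w set" and Wb le sq and V :: "nat \<Rightarrow> 'w set"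
  assumes CS4_model: "CS4_model W Wb le sq V"
begin

lemma frame_conditions:
  "preorder_on W le" "preorder_on W sq" "Wb \<subseteq> W" "up_closed le Wb" "up_closed sq Wb"
  "backward_confluent le sq" "valuation W Wb le V"
  using CS4_model unfolding CS4_model_def CS4_frame_def bi_int_frame_def by simp_all

lemma
  shows le_W: "le x y \<Longrightarrow> x \<in> W \<and> y \<in> W"
    and le_refl: "x \<in> W \<Longrightarrow> le x x"
    and le_trans: "le x y \<Longrightarrow> le y z \<Longrightarrow> le x z"
    and sq_W: "sq x y \<Longrightarrow> x \<in> W \<and> y \<in> W"
    and sq_refl: "x \<in> W \<Longrightarrow> sq x x"
    and sq_trans: "sq x y \<Longrightarrow> sq y z \<Longrightarrow> sq x z"
  using frame_conditions(1,2) unfolding preorder_on_def by blast+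

lemma
  shows fallible_W: "Wb \<subseteq> W"
    and fallible_le: "x \<in> Wb \<Longrightarrow> le x y \<Longrightarrow> y \<in> Wb"
    and fallible_sq: "x \<in> Wb \<Longrightarrow> sq x y \<Longrightarrow> y \<in> Wb"
    and sq_le_confluent: "sq x y \<Longrightarrow> le y y' \<Longrightarrow> \<exists>x'. le x x' \<and> sq x' y'"
    and V_le: "x \<in> V p \<Longrightarrow> le x y \<Longrightarrow> y \<in> V p"
    and fallible_V: "Wb \<subseteq> V p"
  using frame_conditions(3-7)
  unfolding up_closed_def backward_confluent_def valuation_def by blast+

abbreviation sat_at :: "'w \<Rightarrow> fm \<Rightarrow> bool" where
  "sat_at \<equiv> sat Wb le sq V"

lemma sat_le_mono: "le w v \<Longrightarrow> sat_at w \<chi> \<Longrightarrow> sat_at v \<chi>"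
proof (induction \<chi> arbitrary: w v)
  case (Var p) then show ?case using V_le by simp
next
  case Bot then show ?case using fallible_le by simp
next
  case (Or a b) then show ?case by auto
next
  case (Imp a b) then show ?case by (simp, meson le_trans)
next
  case (Dia a) then show ?case by (simp, meson le_trans)
next
  case (Box a) then show ?case by (simp, meson le_trans)
qed simp

lemma fallible_sat: "w \<in> Wb \<Longrightarrow> sat_at w \<chi>"
proof (induction \<chi> arbitrary: w)
  case (Var p) then show ?case using fallible_V by auto
next
  case (Imp a b)
  show ?case unfolding sat.simps using Imp.prems fallible_le Imp.IH(2) by blast
next
  case (Dia a)
  show ?case unfolding sat.simps using Dia fallible_le fallible_W sq_refl by blast
next
  case (Box a)
  show ?case unfolding sat.simps using Box fallible_le fallible_sq by blast
qed simp_all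

lemma ipc_thm_sat: "ipc_thm \<chi> \<Longrightarrow> w \<in> W \<Longrightarrow> sat_at w \<chi>"
proof (induction \<chi> arbitrary: w rule: ipc_thm.induct)
  case (ax1 \<phi> \<psi>)
  show ?case unfolding sat.simps using sat_le_mono by blast
next
  case (ax2 \<phi> \<psi> \<chi>)
  show ?case unfolding sat.simps using le_trans le_W le_refl by meson
next
  case (ax5 \<phi> \<psi>)
  show ?case unfolding sat.simps using sat_le_mono by blast
next
  case (ax8 \<phi> \<chi> \<psi>)
  show ?case unfolding sat.simps using le_trans by meson
next
  case (ax9 \<phi>)
  show ?case unfolding sat.simps using fallible_sat by blast
next
  case (mp \<phi> \<psi>)
  then show ?case using le_refl by auto
qed simp_all

lemma CS4_sat: "CS4 \<chi> \<Longrightarrow> w \<in> W \<Longrightarrow> sat_at w \<chi>"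
proof (induction \<chi> arbitrary: w rule: CS4.induct)
  case (ipc \<phi>)
  then show ?case using ipc_thm_sat by blast
next
  case (K_box \<phi> \<psi>)
  show ?case unfolding sat.simps using le_trans le_refl sq_W by meson
next
  case (K_dia \<phi> \<psi>)
  show ?case unfolding sat.simps using le_trans le_refl sq_W by meson
next
  case (T_box \<phi>)
  show ?case unfolding sat.simps using le_W le_refl sq_refl by meson
next
  case (T_dia \<phi>)
  show ?case unfolding sat.simps using le_W sq_refl sat_le_mono by meson
next
  case (four_box \<phi>)
  show ?case unfolding sat.simps
  proof (intro allI impI)
    fix v1 u v u' v'
    assume "le w v1" "le v1 u" "sq u v" "le v u'" "sq u' v'"
      and box: "\<forall>u v. le v1 u \<longrightarrow> sq u v \<longrightarrow> sat_at v \<phi>"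
    then obtain u'' where "le u u''" "sq u'' u'"
      using sq_le_confluent by blast
    with \<open>le v1 u\<close> \<open>sq u' v'\<close> show "sat_at v' \<phi>"
      using box le_trans sq_trans by blast
  qed
next
  case (four_dia \<phi>)
  show ?case unfolding sat.simps using le_refl sq_W sq_trans by meson
next
  case (MP \<phi> \<psi>)
  then show ?case using le_refl by auto
next
  case (Nec \<phi>)
  show ?case unfolding sat.simps using Nec.IH sq_W by blast
qed

lemma CS4_valid: "CS4 \<phi> \<Longrightarrow> valid_in W Wb le sq V \<phi>"
  unfolding valid_in_def using CS4_sat by blast

lemma CS4_model_pullback:
  assumes g: "g ` N = W"
  shows "CS4_model N (g -` Wb \<inter> N) (pullback_rel g N le) (pullback_rel g N sq) (\<lambda>p. g -` V p \<inter> N)"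
  unfolding CS4_model_def CS4_frame_def bi_int_frame_def
proof (intro conjI)
  have g_W: "x \<in> N \<Longrightarrow> g x \<in> W" for x using g by blast
  have onto: "y \<in> W \<Longrightarrow> \<exists>x\<in>N. g x = y" for y using g by blast
  show "preorder_on N (pullback_rel g N le)"
    unfolding preorder_on_def pullback_rel_def using g_W le_refl le_trans by blast
  show "preorder_on N (pullback_rel g N sq)"
    unfolding preorder_on_def pullback_rel_def using g_W sq_refl sq_trans by blast
  show "g -` Wb \<inter> N \<subseteq> N" by blast
  show "up_closed (pullback_rel g N le) (g -` Wb \<inter> N)"
    unfolding up_closed_def pullback_rel_def using fallible_le by blast
  show "up_closed (pullback_rel g N sq) (g -` Wb \<inter> N)"
    unfolding up_closed_def pullback_rel_def using fallible_sq by blast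
  show "backward_confluent (pullback_rel g N le) (pullback_rel g N sq)"
    unfolding backward_confluent_def
  proof (intro allI impI)
    fix x y y' assume "pullback_rel g N sq x y" "pullback_rel g N le y y'"
    then obtain u where "le (g x) u" "sq u (g y')" and "x \<in> N" "y' \<in> N"
      using sq_le_confluent unfolding pullback_rel_def by blast
    moreover obtain x' where "x' \<in> N" "g x' = u" using onto le_W \<open>le (g x) u\<close> by blast
    ultimately show "\<exists>x'. pullback_rel g N le x x' \<and> pullback_rel g N sq x' y'"
      unfolding pullback_rel_def by blast
  qed
  show "valuation N (g -` Wb \<inter> N) (pullback_rel g N le) (\<lambda>p. g -` V p \<inter> N)"
    unfolding valuation_def up_closed_def pullback_rel_def using V_le fallible_V by blast
qed

lemma sat_pullback:
  assumes g: "g ` N = W" and x: "x \<in> N"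
  shows "sat (g -` Wb \<inter> N) (pullback_rel g N le) (pullback_rel g N sq) (\<lambda>p. g -` V p \<inter> N) x \<chi>
    \<longleftrightarrow> sat Wb le sq V (g x) \<chi>"
proof -
  have le_onto: "\<exists>y\<in>N. g y = v" if "le u v" for u v
    using g le_W[OF that] by blast
  have sq_onto: "\<exists>y\<in>N. g y = v" if "sq u v" for u v
    using g sq_W[OF that] by blast
  show ?thesis
    using x
  proof (induction \<chi> arbitrary: x)
    case (Imp a b)
    then show ?case by (simp add: pullback_rel_def, blast dest: le_onto)
  next
    case (Dia a)
    then show ?case by (simp add: pullback_rel_def, blast dest: le_onto sq_onto)
  next
    case (Box a)
    then show ?case by (simp add: pullback_rel_def, blast dest: le_onto sq_onto)
  qed simp_all
qed

lemma finite_nat_countermodel: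
  assumes "finite W" and "\<not> valid_in W Wb le sq V \<phi>"
  shows "\<exists>(N::nat set) Wb' le' sq' V'. finite N \<and> CS4_model N Wb' le' sq' V' \<and> \<not> valid_in N Wb' le' sq' V' \<phi>"
proof -
  let ?N = "{0..<card W}"
  obtain g where "bij_betw g ?N W" using ex_bij_betw_nat_finite[OF assms(1)] by blast
  then have g: "g ` ?N = W" by (rule bij_betw_imp_surj_on)
  let ?Wb = "g -` Wb \<inter> ?N" and ?le = "pullback_rel g ?N le" and ?sq = "pullback_rel g ?N sq"
    and ?V = "\<lambda>p. g -` V p \<inter> ?N"
  obtain w where w: "w \<in> W - Wb" "\<not> sat Wb le sq V w \<phi>"
    using assms(2) unfolding valid_in_def by blast
  then have "w \<in> g ` ?N" using g by simp
  then obtain x where x: "x \<in> ?N" "g x = w" by blast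
  then have "x \<in> ?N - ?Wb" using w by auto
  moreover have "\<not> sat ?Wb ?le ?sq ?V x \<phi>" using sat_pullback[OF g x(1)] x(2) w(2) by simp
  ultimately have "\<not> valid_in ?N ?Wb ?le ?sq ?V \<phi>" unfolding valid_in_def by blast
  moreover have "finite ?N" by simp
  ultimately show ?thesis using CS4_model_pullback[OF g] by blast
qed

end

inductive derives :: "fm set \<Rightarrow> fm \<Rightarrow> bool" for \<Gamma> where
  hyp: "\<chi> \<in> \<Gamma> \<Longrightarrow> derives \<Gamma> \<chi>"
| CS4_thm: "CS4 \<chi> \<Longrightarrow> derives \<Gamma> \<chi>"
| mp: "derives \<Gamma> (Imp \<phi> \<psi>) \<Longrightarrow> derives \<Gamma> \<phi> \<Longrightarrow> derives \<Gamma> \<psi>"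

lemma derives_empty_CS4: "derives {} \<chi> \<Longrightarrow> CS4 \<chi>"
  by (induction rule: derives.induct) (auto intro: CS4.MP)

lemma derives_CS4_mp: "CS4 (Imp \<phi> \<psi>) \<Longrightarrow> derives \<Gamma> \<phi> \<Longrightarrow> derives \<Gamma> \<psi>"
  by (rule derives.mp[OF derives.CS4_thm])

lemma derives_ipc_mp: "ipc_thm (Imp \<phi> \<psi>) \<Longrightarrow> derives \<Gamma> \<phi> \<Longrightarrow> derives \<Gamma> \<psi>"
  by (rule derives_CS4_mp[OF CS4.ipc])

lemma derives_ipc_mp2:
  "ipc_thm (Imp \<phi> (Imp \<psi> \<chi>)) \<Longrightarrow> derives \<Gamma> \<phi> \<Longrightarrow> derives \<Gamma> \<psi> \<Longrightarrow> derives \<Gamma> \<chi>"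
  using derives_ipc_mp derives.mp by blast

lemma ipc_thm_Imp_self: "ipc_thm (Imp \<phi> \<phi>)"
  using ipc_thm.ax2[of \<phi> "Imp \<phi> \<phi>" \<phi>] ipc_thm.ax1 ipc_thm.mp by blast

lemma derives_deduction: "derives (insert \<phi> \<Gamma>) \<psi> \<Longrightarrow> derives \<Gamma> (Imp \<phi> \<psi>)"
proof (induction rule: derives.induct)
  case (hyp \<chi>)
  then show ?case
    using ipc_thm_Imp_self derives.hyp derives_ipc_mp[OF ipc_thm.ax1] derives.CS4_thm CS4.ipc
    by (metis insert_iff)
next
  case (CS4_thm \<chi>)
  then show ?case using derives_ipc_mp[OF ipc_thm.ax1] derives.CS4_thm by blast
next
  case (mp \<chi> \<psi>)
  then show ?case using derives_ipc_mp2[OF ipc_thm.ax2] by blast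
qed

lemma derives_cut: "derives \<Gamma> \<phi> \<Longrightarrow> derives (insert \<phi> \<Gamma>) \<psi> \<Longrightarrow> derives \<Gamma> \<psi>"
  using derives_deduction derives.mp by blast

lemma derives_Box:
  assumes "derives \<Delta> \<phi>" and "\<And>\<delta>. \<delta> \<in> \<Delta> \<Longrightarrow> derives \<Gamma> (Box \<delta>)"
  shows "derives \<Gamma> (Box \<phi>)"
  using assms
proof (induction rule: derives.induct)
  case (CS4_thm \<chi>) then show ?case by (intro derives.CS4_thm CS4.Nec)
next
  case (mp \<chi> \<psi>) then show ?case using derives_CS4_mp[OF CS4.K_box] derives.mp by blast
qed

definition boxed_part :: "fm set \<Rightarrow> fm set" where
  "boxed_part \<Gamma> = {\<chi>. Box \<chi> \<in> \<Gamma>} \<union> {Box \<chi> | \<chi>. Box \<chi> \<in> \<Gamma>}"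

lemma derives_boxed_part_Box: "derives (boxed_part \<Gamma>) \<phi> \<Longrightarrow> derives \<Gamma> (Box \<phi>)"
proof (erule derives_Box)
  fix \<delta> assume "\<delta> \<in> boxed_part \<Gamma>"
  then show "derives \<Gamma> (Box \<delta>)"
    unfolding boxed_part_def using derives.hyp derives_CS4_mp[OF CS4.four_box] by blast
qed

locale CS4_closed_set =
  fixes S :: "fm set"
  assumes finite_S: "finite S"
    and And_closed: "And a b \<in> S \<Longrightarrow> a \<in> S \<and> b \<in> S"
    and Or_closed: "Or a b \<in> S \<Longrightarrow> a \<in> S \<and> b \<in> S"
    and Imp_closed: "Imp a b \<in> S \<Longrightarrow> a \<in> S \<and> b \<in> S"
    and Dia_closed: "Dia a \<in> S \<Longrightarrow> a \<in> S"
    and Box_closed: "Box a \<in> S \<Longrightarrow> a \<in> S"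
    and Box_Bot_mem: "Box Bot \<in> S"
begin

definition prime_theory :: "fm set \<Rightarrow> bool" where
  "prime_theory \<Gamma> \<longleftrightarrow> \<Gamma> \<subseteq> S \<and> (\<forall>\<chi>\<in>S. derives \<Gamma> \<chi> \<longrightarrow> \<chi> \<in> \<Gamma>)
     \<and> (\<forall>a b. Or a b \<in> \<Gamma> \<longrightarrow> a \<in> \<Gamma> \<or> b \<in> \<Gamma>)"

lemma prime_theory_derives_mem: "prime_theory \<Gamma> \<Longrightarrow> \<chi> \<in> S \<Longrightarrow> derives \<Gamma> \<chi> \<Longrightarrow> \<chi> \<in> \<Gamma>"
  unfolding prime_theory_def by blast

lemma prime_theory_Bot_mem: "prime_theory \<Gamma> \<Longrightarrow> Bot \<in> \<Gamma> \<Longrightarrow> \<chi> \<in> S \<Longrightarrow> \<chi> \<in> \<Gamma>"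
  using prime_theory_derives_mem derives_ipc_mp[OF ipc_thm.ax9] derives.hyp by blast

lemma prime_theory_S: "prime_theory S"
  unfolding prime_theory_def using Or_closed by blast

lemma boxed_part_subset: "\<Gamma> \<subseteq> S \<Longrightarrow> boxed_part \<Gamma> \<subseteq> S"
  unfolding boxed_part_def using Box_closed by blast

lemma lindenbaum:
  assumes "\<Gamma> \<subseteq> S" and "\<not> derives \<Gamma> \<phi>"
  obtains \<Delta> where "prime_theory \<Delta>" "\<Gamma> \<subseteq> \<Delta>" "\<not> derives \<Delta> \<phi>"
proof -
  let ?M = "{\<Delta>. \<Gamma> \<subseteq> \<Delta> \<and> \<Delta> \<subseteq> S \<and> \<not> derives \<Delta> \<phi>}"
  have "finite ?M"
    using finite_S by (rule finite_subset[rotated, OF finite_Pow_iff[THEN iffD2]]) auto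
  moreover have "\<Gamma> \<in> ?M" using assms by auto
  ultimately obtain \<Delta> where \<Delta>: "\<Delta> \<in> ?M" and maximal: "\<forall>\<Delta>'\<in>?M. \<Delta> \<subseteq> \<Delta>' \<longrightarrow> \<Delta> = \<Delta>'"
    using finite_has_maximal[of ?M] by blast
  have insert_derives: "derives (insert \<chi> \<Delta>) \<phi>" if "\<chi> \<in> S" "\<chi> \<notin> \<Delta>" for \<chi>
    using \<Delta> maximal that by blast
  have "prime_theory \<Delta>" unfolding prime_theory_def
  proof (intro conjI ballI allI impI)
    show "\<Delta> \<subseteq> S" using \<Delta> by blast
  next
    fix \<chi> assume "\<chi> \<in> S" "derives \<Delta> \<chi>"
    then show "\<chi> \<in> \<Delta>" using insert_derives derives_cut \<Delta> by blast
  next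
    fix a b assume ab: "Or a b \<in> \<Delta>"
    show "a \<in> \<Delta> \<or> b \<in> \<Delta>"
    proof (rule ccontr)
      assume "\<not> (a \<in> \<Delta> \<or> b \<in> \<Delta>)"
      moreover have "a \<in> S" "b \<in> S" using ab \<Delta> Or_closed by blast+
      ultimately have "derives \<Delta> (Imp a \<phi>)" "derives \<Delta> (Imp b \<phi>)"
        using insert_derives derives_deduction by blast+
      then have "derives \<Delta> (Imp (Or a b) \<phi>)" by (rule derives_ipc_mp2[OF ipc_thm.ax8])
      then show False using derives.mp derives.hyp[OF ab] \<Delta> by blast
    qed
  qed
  with \<Delta> that show ?thesis by blast
qed

text \<open>A canonical world pairs a prime theory with an optional pending diamond \<open>\<psi>\<close>,
  a formula whose diamond the world refutes. Since \<open>can_sq\<close> preserves \<open>\<psi>\<close>, every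
  \<open>can_sq\<close>-successor of \<open>(\<Gamma>, Some \<psi>)\<close> refutes \<open>Dia \<psi>\<close>; this is what makes a
  diamond missing from \<open>\<Gamma>\<close> false at \<open>\<Gamma>\<close>.\<close>

definition can_W :: "(fm set \<times> fm option) set" where
  "can_W = {(\<Gamma>, m). prime_theory \<Gamma> \<and> (\<forall>\<psi>. m = Some \<psi> \<longrightarrow> Dia \<psi> \<in> S \<and> Dia \<psi> \<notin> \<Gamma>)}"

definition can_Wb :: "(fm set \<times> fm option) set" where
  "can_Wb = {w \<in> can_W. Bot \<in> fst w}"

definition can_le :: "fm set \<times> fm option \<Rightarrow> fm set \<times> fm option \<Rightarrow> bool" where
  "can_le w v \<longleftrightarrow> w \<in> can_W \<and> v \<in> can_W \<and> fst w \<subseteq> fst v"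

definition can_sq :: "fm set \<times> fm option \<Rightarrow> fm set \<times> fm option \<Rightarrow> bool" where
  "can_sq w v \<longleftrightarrow> w \<in> can_W \<and> v \<in> can_W \<and> boxed_part (fst w) \<subseteq> fst v
     \<and> (\<forall>\<psi>. snd w = Some \<psi> \<longrightarrow> snd v = Some \<psi>)"

text \<open>Fallible worlds are put into every \<open>can_V p\<close>, since \<open>Var p\<close> need not belong to \<open>S\<close>.\<close>

definition can_V :: "nat \<Rightarrow> (fm set \<times> fm option) set" where
  "can_V p = {w \<in> can_W. Var p \<in> fst w \<or> Bot \<in> fst w}"

lemma mem_can_W:
  "(\<Gamma>, m) \<in> can_W \<longleftrightarrow> prime_theory \<Gamma> \<and> (\<forall>\<psi>. m = Some \<psi> \<longrightarrow> Dia \<psi> \<in> S \<and> Dia \<psi> \<notin> \<Gamma>)"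
  unfolding can_W_def by simp

lemma can_W_prime_theory: "w \<in> can_W \<Longrightarrow> prime_theory (fst w)"
  by (cases w) (simp add: mem_can_W)

lemma can_W_None: "w \<in> can_W \<Longrightarrow> (fst w, None) \<in> can_W"
  by (cases w) (simp add: mem_can_W)

lemma finite_can_W: "finite can_W"
proof (rule finite_subset)
  show "can_W \<subseteq> Pow S \<times> insert None (Some ` S)"
  proof
    fix w assume "w \<in> can_W"
    then obtain \<Gamma> m where w: "w = (\<Gamma>, m)" and "(\<Gamma>, m) \<in> can_W" by (cases w) blast
    then have "\<Gamma> \<subseteq> S" "\<forall>\<psi>. m = Some \<psi> \<longrightarrow> \<psi> \<in> S"
      using Dia_closed unfolding mem_can_W prime_theory_def by blast+
    then show "w \<in> Pow S \<times> insert None (Some ` S)" using w by (cases m) auto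
  qed
  show "finite (Pow S \<times> insert None (Some ` S))" using finite_S by simp
qed

lemma prime_theory_boxed_part: "prime_theory \<Gamma> \<Longrightarrow> boxed_part \<Gamma> \<subseteq> \<Gamma>"
proof
  fix \<chi> assume \<Gamma>: "prime_theory \<Gamma>" and "\<chi> \<in> boxed_part \<Gamma>"
  then consider "Box \<chi> \<in> \<Gamma>" | "\<chi> \<in> \<Gamma>" unfolding boxed_part_def by blast
  then show "\<chi> \<in> \<Gamma>"
  proof cases
    case 1
    then have "\<chi> \<in> S" using \<Gamma> Box_closed unfolding prime_theory_def by blast
    with 1 show ?thesis
      using \<Gamma> prime_theory_derives_mem derives_CS4_mp[OF CS4.T_box derives.hyp] by blast
  qed
qed

lemma can_sq_refl: "w \<in> can_W \<Longrightarrow> can_sq w w"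
  unfolding can_sq_def using can_W_prime_theory prime_theory_boxed_part by blast

lemma boxed_part_trans:
  "boxed_part \<Gamma> \<subseteq> \<Delta> \<Longrightarrow> boxed_part \<Delta> \<subseteq> \<Theta> \<Longrightarrow> boxed_part \<Gamma> \<subseteq> \<Theta>"
  unfolding boxed_part_def by blast

lemma can_sq_trans: "can_sq u v \<Longrightarrow> can_sq v w \<Longrightarrow> can_sq u w"
  unfolding can_sq_def using boxed_part_trans by blast

text \<open>\<open>Box Bot \<in> S\<close> is what makes the fallible worlds upward closed under \<open>can_sq\<close>.\<close>

lemma can_sq_fallible: "w \<in> can_Wb \<Longrightarrow> can_sq w v \<Longrightarrow> v \<in> can_Wb"
  unfolding can_Wb_def can_sq_def boxed_part_def
  using can_W_prime_theory prime_theory_Bot_mem Box_Bot_mem by blast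

lemma can_sq_le_confluent: "can_sq w v \<Longrightarrow> can_le v v' \<Longrightarrow> can_le w (fst w, None) \<and> can_sq (fst w, None) v'"
  unfolding can_sq_def can_le_def using can_W_None by auto

lemma CS4_model_can: "CS4_model can_W can_Wb can_le can_sq can_V"
  unfolding CS4_model_def CS4_frame_def bi_int_frame_def
proof (intro conjI)
  show "preorder_on can_W can_le" unfolding preorder_on_def can_le_def by blast
  show "preorder_on can_W can_sq" unfolding preorder_on_def
    using can_sq_refl can_sq_trans unfolding can_sq_def by blast
  show "can_Wb \<subseteq> can_W" "up_closed can_le can_Wb"
    unfolding up_closed_def can_Wb_def can_le_def by blast+
  show "up_closed can_sq can_Wb" unfolding up_closed_def using can_sq_fallible by blast
  show "backward_confluent can_le can_sq"
    unfolding backward_confluent_def using can_sq_le_confluent by blast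
  show "valuation can_W can_Wb can_le can_V"
    unfolding valuation_def up_closed_def can_V_def can_Wb_def can_le_def by blast
qed

lemma mem_And_iff:
  assumes \<Gamma>: "prime_theory \<Gamma>" and "And a b \<in> S"
  shows "And a b \<in> \<Gamma> \<longleftrightarrow> a \<in> \<Gamma> \<and> b \<in> \<Gamma>"
proof
  assume "And a b \<in> \<Gamma>"
  then have "derives \<Gamma> a" "derives \<Gamma> b"
    using derives_ipc_mp[OF ipc_thm.ax3] derives_ipc_mp[OF ipc_thm.ax4] derives.hyp by blast+
  moreover have "a \<in> S" "b \<in> S" using And_closed assms(2) by blast+
  ultimately show "a \<in> \<Gamma> \<and> b \<in> \<Gamma>" using \<Gamma> prime_theory_derives_mem by blast
next
  assume "a \<in> \<Gamma> \<and> b \<in> \<Gamma>"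
  then have "derives \<Gamma> (And a b)" using derives_ipc_mp2[OF ipc_thm.ax5] derives.hyp by blast
  then show "And a b \<in> \<Gamma>" using \<Gamma> assms(2) prime_theory_derives_mem by blast
qed

lemma mem_Or_iff:
  assumes \<Gamma>: "prime_theory \<Gamma>" and "Or a b \<in> S"
  shows "Or a b \<in> \<Gamma> \<longleftrightarrow> a \<in> \<Gamma> \<or> b \<in> \<Gamma>"
proof
  show "a \<in> \<Gamma> \<or> b \<in> \<Gamma>" if "Or a b \<in> \<Gamma>" using that \<Gamma> unfolding prime_theory_def by blast
next
  assume "a \<in> \<Gamma> \<or> b \<in> \<Gamma>"
  then have "derives \<Gamma> (Or a b)"
    using derives_ipc_mp[OF ipc_thm.ax6] derives_ipc_mp[OF ipc_thm.ax7] derives.hyp by blast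
  then show "Or a b \<in> \<Gamma>" using \<Gamma> assms(2) prime_theory_derives_mem by blast
qed

lemma mem_Imp_iff:
  assumes w: "w \<in> can_W" and "Imp a b \<in> S"
  shows "Imp a b \<in> fst w \<longleftrightarrow> (\<forall>v. can_le w v \<longrightarrow> a \<in> fst v \<longrightarrow> b \<in> fst v)"
proof
  have "b \<in> S" using Imp_closed assms(2) by blast
  then show "\<forall>v. can_le w v \<longrightarrow> a \<in> fst v \<longrightarrow> b \<in> fst v" if "Imp a b \<in> fst w"
    using that can_W_prime_theory prime_theory_derives_mem derives.mp derives.hyp
    unfolding can_le_def by blast
next
  assume step: "\<forall>v. can_le w v \<longrightarrow> a \<in> fst v \<longrightarrow> b \<in> fst v"
  show "Imp a b \<in> fst w"
  proof (rule ccontr)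
    assume "Imp a b \<notin> fst w"
    then have "\<not> derives (insert a (fst w)) b"
      using w assms(2) can_W_prime_theory prime_theory_derives_mem derives_deduction by blast
    moreover have "insert a (fst w) \<subseteq> S"
      using w assms(2) Imp_closed can_W_prime_theory unfolding prime_theory_def by blast
    ultimately obtain \<Delta> where \<Delta>: "prime_theory \<Delta>" "insert a (fst w) \<subseteq> \<Delta>" "\<not> derives \<Delta> b"
      using lindenbaum by blast
    then have "can_le w (\<Delta>, None)" using w by (simp add: can_le_def mem_can_W)
    then show False using step \<Delta> derives.hyp by fastforce
  qed
qed

lemma mem_Box_iff:
  assumes w: "w \<in> can_W" and "Box a \<in> S"
  shows "Box a \<in> fst w \<longleftrightarrow> (\<forall>u v. can_le w u \<longrightarrow> can_sq u v \<longrightarrow> a \<in> fst v)"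
proof
  show "\<forall>u v. can_le w u \<longrightarrow> can_sq u v \<longrightarrow> a \<in> fst v" if "Box a \<in> fst w"
  proof (intro allI impI)
    fix u v assume "can_le w u" "can_sq u v"
    then have "Box a \<in> fst u" "boxed_part (fst u) \<subseteq> fst v"
      using that unfolding can_le_def can_sq_def by blast+
    then show "a \<in> fst v" unfolding boxed_part_def by blast
  qed
next
  assume step: "\<forall>u v. can_le w u \<longrightarrow> can_sq u v \<longrightarrow> a \<in> fst v"
  show "Box a \<in> fst w"
  proof (rule ccontr)
    assume "Box a \<notin> fst w"
    then have "\<not> derives (boxed_part (fst w)) a"
      using prime_theory_derives_mem[OF can_W_prime_theory[OF w] assms(2)] derives_boxed_part_Box by blast
    moreover have "boxed_part (fst w) \<subseteq> S"
      using can_W_prime_theory[OF w] boxed_part_subset unfolding prime_theory_def by blast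
    ultimately obtain \<Delta> where \<Delta>: "prime_theory \<Delta>" "boxed_part (fst w) \<subseteq> \<Delta>" "\<not> derives \<Delta> a"
      using lindenbaum by blast
    have "can_le w (fst w, None)" "can_sq (fst w, None) (\<Delta>, None)"
      using w can_W_None \<Delta> by (auto simp: can_le_def can_sq_def mem_can_W)
    then have "a \<in> \<Delta>" using step by fastforce
    then show False using \<Delta> derives.hyp by blast
  qed
qed

lemma Dia_mem_can_sq_witness:
  assumes u: "u \<in> can_W" and "Dia a \<in> fst u"
  obtains v where "can_sq u v" and "a \<in> fst v"
proof -
  have \<Gamma>: "prime_theory (fst u)" using u by (rule can_W_prime_theory)
  then have a: "a \<in> S" and boxed_S: "boxed_part (fst u) \<subseteq> S"
    using assms(2) Dia_closed boxed_part_subset unfolding prime_theory_def by blast+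
  show ?thesis
  proof (cases "snd u")
    case None
    txt \<open>The fallible world \<open>(S, None)\<close> is then a witness.\<close>
    then have "can_sq u (S, None)"
      using u boxed_S prime_theory_S unfolding can_sq_def mem_can_W by simp
    with a show ?thesis using that by simp
  next
    case (Some \<psi>)
    obtain \<Gamma>' where u_eq: "u = (\<Gamma>', Some \<psi>)" using Some by (cases u) simp
    have \<psi>: "Dia \<psi> \<in> S" "Dia \<psi> \<notin> fst u" using u unfolding u_eq mem_can_W by simp_all
    have "\<not> derives (insert a (boxed_part (fst u))) (Dia \<psi>)"
    proof
      assume "derives (insert a (boxed_part (fst u))) (Dia \<psi>)"
      then have "derives (fst u) (Box (Imp a (Dia \<psi>)))"
        by (intro derives_boxed_part_Box derives_deduction)
      then have "derives (fst u) (Imp (Dia a) (Dia (Dia \<psi>)))"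
        by (rule derives_CS4_mp[OF CS4.K_dia])
      then have "derives (fst u) (Dia (Dia \<psi>))" using derives.hyp[OF assms(2)] by (rule derives.mp)
      then have "derives (fst u) (Dia \<psi>)" by (rule derives_CS4_mp[OF CS4.four_dia])
      then show False using prime_theory_derives_mem[OF \<Gamma> \<psi>(1)] \<psi>(2) by blast
    qed
    moreover have "insert a (boxed_part (fst u)) \<subseteq> S" using a boxed_S by blast
    ultimately obtain \<Delta> where \<Delta>: "prime_theory \<Delta>" "insert a (boxed_part (fst u)) \<subseteq> \<Delta>"
        "\<not> derives \<Delta> (Dia \<psi>)"
      using lindenbaum by blast
    then have "(\<Delta>, Some \<psi>) \<in> can_W" unfolding mem_can_W using \<psi>(1) derives.hyp by blast
    then have "can_sq u (\<Delta>, Some \<psi>)" using u Some \<Delta>(2) by (simp add: can_sq_def)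
    with \<Delta>(2) show ?thesis using that by simp
  qed
qed

lemma mem_Dia_iff:
  assumes w: "w \<in> can_W" and "Dia a \<in> S"
  shows "Dia a \<in> fst w \<longleftrightarrow> (\<forall>u. can_le w u \<longrightarrow> (\<exists>v. can_sq u v \<and> a \<in> fst v))"
proof
  show "\<forall>u. can_le w u \<longrightarrow> (\<exists>v. can_sq u v \<and> a \<in> fst v)" if "Dia a \<in> fst w"
  proof (intro allI impI)
    fix u assume "can_le w u"
    then have "u \<in> can_W" "Dia a \<in> fst u" using that unfolding can_le_def by blast+
    then show "\<exists>v. can_sq u v \<and> a \<in> fst v" by (blast elim: Dia_mem_can_sq_witness)
  qed
next
  assume step: "\<forall>u. can_le w u \<longrightarrow> (\<exists>v. can_sq u v \<and> a \<in> fst v)"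
  show "Dia a \<in> fst w"
  proof (rule ccontr)
    assume "Dia a \<notin> fst w"
    then have "(fst w, Some a) \<in> can_W"
      using can_W_prime_theory[OF w] assms(2) by (simp add: mem_can_W)
    then have "can_le w (fst w, Some a)" using w by (simp add: can_le_def)
    then obtain v where v: "can_sq (fst w, Some a) v" "a \<in> fst v" using step by blast
    then obtain \<Delta> where v_eq: "v = (\<Delta>, Some a)" and "v \<in> can_W"
      unfolding can_sq_def by (cases v) simp
    then have \<Delta>: "prime_theory \<Delta>" "Dia a \<notin> \<Delta>" by (simp_all add: mem_can_W)
    have "derives \<Delta> (Dia a)" using v(2) v_eq derives_CS4_mp[OF CS4.T_dia derives.hyp] by simp
    then show False using prime_theory_derives_mem[OF \<Delta>(1) assms(2)] \<Delta>(2) by blast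
  qed
qed

abbreviation can_sat :: "fm set \<times> fm option \<Rightarrow> fm \<Rightarrow> bool" where
  "can_sat \<equiv> sat can_Wb can_le can_sq can_V"

lemma can_truth: "\<chi> \<in> S \<Longrightarrow> w \<in> can_W \<Longrightarrow> can_sat w \<chi> \<longleftrightarrow> \<chi> \<in> fst w"
proof (induction \<chi> arbitrary: w)
  case (Var p)
  then show ?case
    using prime_theory_Bot_mem[OF can_W_prime_theory[OF Var.prems(2)]] by (auto simp: can_V_def)
next
  case Bot
  then show ?case by (simp add: can_Wb_def)
next
  case (And a b)
  then have "a \<in> S" "b \<in> S" using And_closed by blast+
  then show ?case using And mem_And_iff[OF can_W_prime_theory[OF And.prems(2)] And.prems(1)] by simp
next
  case (Or a b)
  then have "a \<in> S" "b \<in> S" using Or_closed by blast+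
  then show ?case using Or mem_Or_iff[OF can_W_prime_theory[OF Or.prems(2)] Or.prems(1)] by simp
next
  case (Imp a b)
  have "can_sat v a \<longleftrightarrow> a \<in> fst v" "can_sat v b \<longleftrightarrow> b \<in> fst v" if "can_le w v" for v
    using that Imp Imp_closed unfolding can_le_def by blast+
  then show ?case using mem_Imp_iff[OF Imp.prems(2,1)] by simp
next
  case (Dia a)
  have "can_sat v a \<longleftrightarrow> a \<in> fst v" if "can_sq u v" for u v
    using that Dia Dia_closed unfolding can_sq_def by blast
  then show ?case unfolding sat.simps mem_Dia_iff[OF Dia.prems(2,1)] by blast
next
  case (Box a)
  have "can_sat v a \<longleftrightarrow> a \<in> fst v" if "can_sq u v" for u v
    using that Box Box_closed unfolding can_sq_def by blast
  then show ?case using mem_Box_iff[OF Box.prems(2,1)] by simp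
qed

lemma can_refutes:
  assumes "\<phi> \<in> S" and "\<not> CS4 \<phi>"
  shows "\<not> valid_in can_W can_Wb can_le can_sq can_V \<phi>"
proof -
  have "\<not> derives {} \<phi>" using assms(2) derives_empty_CS4 by blast
  then obtain \<Gamma> where \<Gamma>: "prime_theory \<Gamma>" "\<not> derives \<Gamma> \<phi>"
    using lindenbaum by blast
  then have w: "(\<Gamma>, None) \<in> can_W" by (simp add: mem_can_W)
  have "Bot \<notin> \<Gamma>" using \<Gamma>(2) derives_ipc_mp[OF ipc_thm.ax9 derives.hyp] by blast
  then have "(\<Gamma>, None) \<in> can_W - can_Wb" using w by (simp add: can_Wb_def)
  moreover have "\<not> can_sat (\<Gamma>, None) \<phi>"
    using can_truth[OF assms(1) w] \<Gamma>(2) derives.hyp by auto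
  ultimately show ?thesis unfolding valid_in_def by blast
qed

end

fun subformulas :: "fm \<Rightarrow> fm set" where
  "subformulas (Var p) = {Var p}"
| "subformulas Bot = {Bot}"
| "subformulas (And a b) = insert (And a b) (subformulas a \<union> subformulas b)"
| "subformulas (Or a b) = insert (Or a b) (subformulas a \<union> subformulas b)"
| "subformulas (Imp a b) = insert (Imp a b) (subformulas a \<union> subformulas b)"
| "subformulas (Dia a) = insert (Dia a) (subformulas a)"
| "subformulas (Box a) = insert (Box a) (subformulas a)"

lemma subformulas_self: "\<phi> \<in> subformulas \<phi>"
  by (cases \<phi>) auto

lemma finite_subformulas: "finite (subformulas \<phi>)"
  by (induction \<phi>) auto

lemma subformulas_trans: "\<chi> \<in> subformulas \<phi> \<Longrightarrow> subformulas \<chi> \<subseteq> subformulas \<phi>"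
  by (induction \<phi>) auto

lemma CS4_closed_set_subformulas: "CS4_closed_set (subformulas \<phi> \<union> subformulas (Box Bot))"
proof -
  have below: "subformulas \<chi> \<subseteq> subformulas \<phi> \<union> subformulas (Box Bot)"
    if "\<chi> \<in> subformulas \<phi> \<union> subformulas (Box Bot)" for \<chi>
    using that subformulas_trans by auto
  show ?thesis
  proof
    show "finite (subformulas \<phi> \<union> subformulas (Box Bot))" using finite_subformulas by simp
  qed (use below subformulas_self in \<open>fastforce+\<close>)
qed

theorem mainTheorem1:
  fixes \<phi> :: fm
  shows "(\<not> CS4 \<phi> \<longrightarrow>
            (\<exists>(W::nat set) Wb le sq V. finite W \<and> CS4_model W Wb le sq V \<and>
                \<not> valid_in W Wb le sq V \<phi>))
       \<and> (CS4 \<phi> \<longrightarrow>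
            (\<forall>(W::'w set) Wb le sq V. CS4_model W Wb le sq V \<longrightarrow> valid_in W Wb le sq V \<phi>))"
proof (intro conjI impI allI)
  assume "\<not> CS4 \<phi>"
  interpret CS4_closed_set "subformulas \<phi> \<union> subformulas (Box Bot)"
    by (rule CS4_closed_set_subformulas)
  interpret can: CS4_semantics can_W can_Wb can_le can_sq can_V
    by (rule CS4_semantics.intro, rule CS4_model_can)
  have "\<not> valid_in can_W can_Wb can_le can_sq can_V \<phi>"
    using can_refutes subformulas_self \<open>\<not> CS4 \<phi>\<close> by blast
  then show "\<exists>(W::nat set) Wb le sq V. finite W \<and> CS4_model W Wb le sq V \<and> \<not> valid_in W Wb le sq V \<phi>"
    by (rule can.finite_nat_countermodel[OF finite_can_W])
next
  fix W :: "'w set" and Wb le sq V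
  assume "CS4 \<phi>" and "CS4_model W Wb le sq V"
  then show "valid_in W Wb le sq V \<phi>" by (intro CS4_semantics.CS4_valid CS4_semantics.intro)
qed

end
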